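(* If $G$ is a connected graph of maximum degree at most $3$, then $\gamma_e(G)\leq\frac{1}{3}(n(G)+2)$.
   Context: All graphs are finite, simple and undirected; $n(G)=|V(G)|$. For a graph $G$, a set $S\subseteq V(G)$, and vertices $u,v$ with $u\in S$ or $v\in S$, ${\rm dist}_{(G,S)}(u,v)$ is the minimum number of edges of a path $P$ in $G$ between $u$ and $v$ such that $S$ contains exactly one endvertex of $P$ and no internal vertex of $P$, and $\infty$ if no such path exists (so ${\rm dist}_{(G,S)}(u,u)=0$ for $u\in S$). For $u\in V(G)$, $w_{(G,S)}(u)=\sum_{v\in S}(1/2)^{{\rm dist}_{(G,S)}(u,v)-1}$ with $(1/2)^{\infty}=0$. $S$ is an exponential dominating set of $G$ if $w_{(G,S)}(u)\geq 1$ for every $u\in V(G)$, and $\gamma_e(G)$ is the minimum cardinality of an exponential dominating set of $G$. *)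

theory Defs
  imports Complex_Main "HOL-Library.Extended_Nat"
begin

definition simple_graph :: "'a set \<Rightarrow> ('a \<Rightarrow> 'a \<Rightarrow> bool) \<Rightarrow> bool" where
  "simple_graph V E \<longleftrightarrow> finite V \<and> (\<forall>u v. E u v \<longrightarrow> u \<in> V \<and> v \<in> V)
     \<and> (\<forall>u v. E u v \<longrightarrow> E v u) \<and> (\<forall>u. \<not> E u u)"

definition connected_graph :: "'a set \<Rightarrow> ('a \<Rightarrow> 'a \<Rightarrow> bool) \<Rightarrow> bool" where
  "connected_graph V E \<longleftrightarrow> (\<forall>u\<in>V. \<forall>v\<in>V. E\<^sup>*\<^sup>* u v)"

definition degree :: "'a set \<Rightarrow> ('a \<Rightarrow> 'a \<Rightarrow> bool) \<Rightarrow> 'a \<Rightarrow> nat" where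
  "degree V E u = card {v\<in>V. E u v}"

definition is_path :: "'a set \<Rightarrow> ('a \<Rightarrow> 'a \<Rightarrow> bool) \<Rightarrow> 'a list \<Rightarrow> bool" where
  "is_path V E p \<longleftrightarrow> p \<noteq> [] \<and> set p \<subseteq> V \<and> distinct p
     \<and> (\<forall>i. Suc i < length p \<longrightarrow> E (p ! i) (p ! Suc i))"

definition S_path :: "'a set \<Rightarrow> ('a \<Rightarrow> 'a \<Rightarrow> bool) \<Rightarrow> 'a set \<Rightarrow> 'a \<Rightarrow> 'a \<Rightarrow> 'a list \<Rightarrow> bool" where
  "S_path V E S u v p \<longleftrightarrow> is_path V E p \<and> hd p = u \<and> last p = v
     \<and> card (S \<inter> {hd p, last p}) = 1
     \<and> set (butlast (tl p)) \<inter> S = {}"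

definition distS :: "'a set \<Rightarrow> ('a \<Rightarrow> 'a \<Rightarrow> bool) \<Rightarrow> 'a set \<Rightarrow> 'a \<Rightarrow> 'a \<Rightarrow> enat" where
  "distS V E S u v =
     (if \<exists>p. S_path V E S u v p
      then enat (LEAST k. \<exists>p. S_path V E S u v p \<and> length p = Suc k)
      else \<infinity>)"

text \<open>(1/2)^(d-1) with (1/2)^\<infinity> = 0; written as 2 * (1/2)^d to allow d = 0.\<close>
definition exp_weight :: "'a set \<Rightarrow> ('a \<Rightarrow> 'a \<Rightarrow> bool) \<Rightarrow> 'a set \<Rightarrow> 'a \<Rightarrow> real" where
  "exp_weight V E S u =
     (\<Sum>v\<in>S. (case distS V E S u v of enat d \<Rightarrow> 2 * (1/2) ^ d | \<infinity> \<Rightarrow> 0))"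

definition exp_dominating :: "'a set \<Rightarrow> ('a \<Rightarrow> 'a \<Rightarrow> bool) \<Rightarrow> 'a set \<Rightarrow> bool" where
  "exp_dominating V E S \<longleftrightarrow> S \<subseteq> V \<and> (\<forall>u\<in>V. exp_weight V E S u \<ge> 1)"

definition gamma_e :: "'a set \<Rightarrow> ('a \<Rightarrow> 'a \<Rightarrow> bool) \<Rightarrow> nat" where
  "gamma_e V E = (LEAST k. \<exists>S. exp_dominating V E S \<and> card S = k)"

end

theory Submission
  imports Defs
begin

text \<open>Take a spanning tree of \<open>G\<close>, rooted at a non-cut vertex of degree one in the tree, in
  which every vertex has at most two children (here \<open>\<Delta>(G) \<le> 3\<close> is used). One proves the stronger
  statement that for every set \<open>F\<close> of leaves (and possibly the root) some exponential dominating
  set \<open>S \<supseteq> F\<close> has \<open>3|S| \<le> n + 2 + |F|\<close>, by induction on \<open>n\<close>: near a deepest leaf a small union of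
  subtrees is removed, the statement is applied to the rest, and few vertices are added. When the
  removed part hangs off a vertex \<open>v\<close>, one may force \<open>v\<close> into the smaller solution and then trade
  it for two of its children, which together receive at least the weight \<open>v\<close> sent. Restricting
  to a vertex subset only removes admissible paths, so weights computed in a part are lower
  bounds for weights in \<open>G\<close>.\<close>

section \<open>Weights along admissible paths\<close>

definition dist_weight :: "enat \<Rightarrow> real" where
  "dist_weight d = (case d of enat k \<Rightarrow> 2 * (1/2) ^ k | \<infinity> \<Rightarrow> 0)"

lemma exp_weight_eq_sum: "exp_weight V E S u = (\<Sum>v\<in>S. dist_weight (distS V E S u v))"
  by (simp add: exp_weight_def dist_weight_def)

lemma dist_weight_nonneg: "dist_weight d \<ge> 0"
  by (cases d) (auto simp: dist_weight_def)

lemma dist_weight_enat: "dist_weight (enat k) = 2 * (1/2) ^ k"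
  by (simp add: dist_weight_def)

lemma S_path_nonempty: "S_path V E S u v p \<Longrightarrow> p \<noteq> []"
  by (simp add: S_path_def is_path_def)

lemma S_path_set_subset: "S_path V E S u v p \<Longrightarrow> set p \<subseteq> V"
  by (simp add: S_path_def is_path_def)

lemma distS_obtain_path:
  assumes "distS V E S u v = enat k"
  obtains p where "S_path V E S u v p" "length p = Suc k"
proof -
  have ex: "\<exists>p. S_path V E S u v p" using assms by (auto simp: distS_def split: if_splits)
  then have k: "k = (LEAST k. \<exists>p. S_path V E S u v p \<and> length p = Suc k)"
    using assms by (simp add: distS_def)
  from ex obtain p where p: "S_path V E S u v p" by blast
  then have "\<exists>k p. S_path V E S u v p \<and> length p = Suc k"
    using S_path_nonempty[OF p] by (intro exI[of _ "length p - 1"] exI[of _ p]) auto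
  from LeastI_ex[OF this] that show ?thesis unfolding k[symmetric] by blast
qed

lemma distS_le_path_length:
  assumes "S_path V E S u v p"
  shows "distS V E S u v \<le> enat (length p - 1)"
proof -
  have "(LEAST k. \<exists>p. S_path V E S u v p \<and> length p = Suc k) \<le> length p - 1"
    by (rule Least_le) (use assms S_path_nonempty[OF assms] in auto)
  then show ?thesis using assms by (auto simp: distS_def)
qed

lemma dist_weight_ge_path:
  assumes "S_path V E S u v p"
  shows "dist_weight (distS V E S u v) \<ge> 2 * (1/2) ^ (length p - 1)"
proof -
  obtain k where k: "distS V E S u v = enat k" "k \<le> length p - 1"
    using distS_le_path_length[OF assms] by (cases "distS V E S u v") auto
  have "(1/2::real) ^ (length p - 1) \<le> (1/2) ^ k"
    by (rule power_decreasing) (use k in auto)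
  then show ?thesis using k by (simp add: dist_weight_enat)
qed

lemma dist_weight_ge_of_path_map:
  assumes "\<And>p. S_path V2 E S2 u2 v2 p \<Longrightarrow> \<exists>q. S_path V1 E S1 u1 v1 q \<and> length q \<le> length p + j"
  shows "dist_weight (distS V1 E S1 u1 v1) \<ge> (1/2) ^ j * dist_weight (distS V2 E S2 u2 v2)"
proof (cases "distS V2 E S2 u2 v2")
  case (enat k)
  obtain p where p: "S_path V2 E S2 u2 v2 p" "length p = Suc k"
    using distS_obtain_path[OF enat] by blast
  obtain q where q: "S_path V1 E S1 u1 v1 q" "length q \<le> length p + j"
    using assms[OF p(1)] by blast
  have "(1/2::real) ^ (k + j) \<le> (1/2) ^ (length q - 1)"
    by (rule power_decreasing) (use q p in auto)
  moreover have "(1/2) ^ j * dist_weight (distS V2 E S2 u2 v2) = 2 * (1/2::real) ^ (k + j)"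
    using enat by (simp add: dist_weight_enat power_add algebra_simps)
  ultimately show ?thesis using dist_weight_ge_path[OF q(1)] by linarith
next
  case infinity
  then show ?thesis using dist_weight_nonneg by (simp add: dist_weight_def)
qed

lemma set_eq_ends_inner:
  assumes "p \<noteq> []"
  shows "set p = insert (hd p) (insert (last p) (set (butlast (tl p))))"
proof (cases "tl p = []")
  case True
  then show ?thesis using assms by (cases p) auto
next
  case False
  have "set (tl p) = insert (last (tl p)) (set (butlast (tl p)))"
    using append_butlast_last_id[OF False] by (metis list.simps(15) rotate1.simps(2) set_rotate1)
  moreover have "last (tl p) = last p" using False assms by (cases p) auto
  moreover have "set p = insert (hd p) (set (tl p))" using assms by (cases p) auto
  ultimately show ?thesis by auto
qed

lemma set_inner_subset: "set (butlast (tl p)) \<subseteq> set p"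
  by (metis in_set_butlastD list.set_sel(2) subsetI tl_Nil)

lemma S_path_transfer:
  assumes "S_path V2 E S2 u v p" "set p \<subseteq> V1" "\<forall>x\<in>set p. x \<in> S1 \<longleftrightarrow> x \<in> S2"
  shows "S_path V1 E S1 u v p"
proof -
  have "hd p \<in> set p" "last p \<in> set p" using S_path_nonempty[OF assms(1)] by auto
  then have "S1 \<inter> {hd p, last p} = S2 \<inter> {hd p, last p}" using assms(3) by auto
  moreover have "set (butlast (tl p)) \<inter> S1 = set (butlast (tl p)) \<inter> S2"
    using assms(3) set_inner_subset[of p] by blast
  moreover have "is_path V1 E p" using assms(1,2) by (simp add: S_path_def is_path_def)
  moreover have "hd p = u" "last p = v" using assms(1) by (simp_all add: S_path_def)
  ultimately show ?thesis using assms(1) by (simp add: S_path_def)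
qed

lemma is_path_Cons:
  assumes "is_path V2 E p" "z \<in> V1" "set p \<subseteq> V1" "z \<notin> set p" "E z (hd p)"
  shows "is_path V1 E (z # p)"
  using assms by (auto simp: is_path_def nth_Cons hd_conv_nth split: nat.splits)

lemma is_path_snoc:
  assumes "is_path V2 E p" "n \<in> V1" "set p \<subseteq> V1" "n \<notin> set p" "E (last p) n"
  shows "is_path V1 E (p @ [n])"
proof -
  have "E ((p @ [n]) ! i) ((p @ [n]) ! Suc i)" if i: "Suc i < length (p @ [n])" for i
  proof (cases "Suc i < length p")
    case True
    then show ?thesis using assms(1) by (auto simp: is_path_def nth_append)
  next
    case False
    then have "i = length p - 1" "Suc i = length p" using i by simp_all
    then show ?thesis using assms(1,5) by (auto simp: is_path_def nth_append last_conv_nth)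
  qed
  then show ?thesis using assms by (auto simp: is_path_def)
qed

lemma S_path_Cons:
  assumes p: "S_path V2 E S2 a s p" and z: "z \<in> V1" "E z a" "z \<notin> set p" "z \<notin> S1"
    and "set p \<subseteq> V1" "a \<notin> S1" "\<forall>x\<in>set p. x \<in> S1 \<longleftrightarrow> x \<in> S2"
  shows "S_path V1 E S1 z s (z # p)"
proof -
  have ne: "p \<noteq> []" using S_path_nonempty[OF p] .
  have hd: "hd p = a" and lst: "last p = s" and c: "card (S2 \<inter> {a, s}) = 1"
    and inner: "set (butlast (tl p)) \<inter> S2 = {}"
    using p by (auto simp: S_path_def)
  have sp: "s \<in> set p" "a \<in> set p" using ne hd lst by auto
  have "a \<notin> S2" using assms sp by auto
  then have "s \<in> S2" using c by (cases "s \<in> S2") auto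
  then have "S1 \<inter> {z, s} = {s}" using assms sp by auto
  moreover have "set (butlast (tl (z # p))) \<inter> S1 = {}"
  proof -
    have "set (butlast p) \<subseteq> insert a (set (butlast (tl p)))" using ne hd by (cases p) auto
    moreover have "set (butlast p) \<subseteq> set p" by (meson in_set_butlastD subsetI)
    ultimately show ?thesis using inner assms by simp blast
  qed
  moreover have "is_path V1 E (z # p)"
    using p assms hd by (intro is_path_Cons) (auto simp: S_path_def)
  ultimately show ?thesis using lst ne by (simp add: S_path_def)
qed

lemma S_path_snoc:
  assumes p: "S_path V2 E S2 u a p" and n: "n \<in> V1" "E a n" "n \<notin> set p" "n \<in> S1"
    and "set p \<subseteq> V1" "u \<notin> S1" "a \<notin> S1" "a \<in> S2"
    and "\<forall>x\<in>set p. x \<noteq> a \<longrightarrow> (x \<in> S1 \<longleftrightarrow> x \<in> S2)"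
  shows "S_path V1 E S1 u n (p @ [n])"
proof -
  have ne: "p \<noteq> []" using S_path_nonempty[OF p] .
  have hd: "hd p = u" and lst: "last p = a" and inner: "set (butlast (tl p)) \<inter> S2 = {}"
    using p by (auto simp: S_path_def)
  have "set (tl p) \<subseteq> insert a (set (butlast (tl p)))"
  proof (cases "tl p = []")
    case False
    then have tl: "tl p = butlast (tl p) @ [a]" using lst by (metis append_butlast_last_id last_tl)
    show ?thesis using arg_cong[OF tl, of set] by auto
  qed simp
  moreover have "x \<notin> S1" if "x \<in> set (butlast (tl p))" for x
    using that assms(8,10) inner set_inner_subset[of p] by (cases "x = a") auto
  ultimately have "set (tl p) \<inter> S1 = {}" using assms(8) by blast
  moreover have "butlast (tl (p @ [n])) = tl p" using ne by (cases p) auto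
  moreover have "S1 \<inter> {u, n} = {n}" using assms by auto
  moreover have "is_path V1 E (p @ [n])"
    using p assms lst by (intro is_path_snoc) (auto simp: S_path_def)
  ultimately show ?thesis using hd ne by (simp add: S_path_def)
qed

lemma S_path_singleton: "u \<in> S \<Longrightarrow> u \<in> V \<Longrightarrow> S_path V E S u u [u]"
  by (simp add: S_path_def is_path_def)

lemma S_path_edge:
  assumes "u \<in> V" "s \<in> V" "u \<notin> S" "s \<in> S" "E u s"
  shows "S_path V E S u s [u, s]"
proof -
  have "S \<inter> {u, s} = {s}" using assms by auto
  then show ?thesis using assms by (auto simp: S_path_def is_path_def less_Suc_eq)
qed

lemma S_path_two_edges:
  assumes "u \<in> V" "m \<in> V" "s \<in> V" "u \<notin> S" "m \<notin> S" "s \<in> S" "u \<noteq> m" "E u m" "E m s"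
  shows "S_path V E S u s [u, m, s]"
proof -
  have "S \<inter> {u, s} = {s}" using assms by auto
  moreover have "E ([u, m, s] ! i) ([u, m, s] ! Suc i)" if "Suc i < 3" for i
  proof -
    have "i = 0 \<or> i = 1" using that by auto
    then show ?thesis using assms(8,9) by auto
  qed
  ultimately show ?thesis using assms
    by (auto simp: S_path_def is_path_def numeral_3_eq_3)
qed

lemma exp_weight_ge_path:
  assumes "finite S" "v \<in> S" "S_path V E S u v p"
  shows "exp_weight V E S u \<ge> 2 * (1/2) ^ (length p - 1)"
proof -
  have "dist_weight (distS V E S u v) \<le> (\<Sum>v\<in>S. dist_weight (distS V E S u v))"
    by (rule member_le_sum) (use assms dist_weight_nonneg in auto)
  then show ?thesis using dist_weight_ge_path[OF assms(3)] by (simp add: exp_weight_eq_sum)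
qed

lemma exp_weight_member: "finite S \<Longrightarrow> u \<in> S \<Longrightarrow> u \<in> V \<Longrightarrow> exp_weight V E S u \<ge> 2"
  using exp_weight_ge_path[OF _ _ S_path_singleton, of S u V E] by simp

lemma exp_weight_neighbour:
  assumes "finite S" "u \<in> V" "s \<in> V" "u \<notin> S" "s \<in> S" "E u s"
  shows "exp_weight V E S u \<ge> 1"
proof -
  have "S_path V E S u s [u, s]" using S_path_edge assms by metis
  from exp_weight_ge_path[OF assms(1,5) this] show ?thesis by simp
qed

lemma exp_dominating_if_adjacent:
  assumes "finite V" "S \<subseteq> V" "\<And>u. u \<in> V \<Longrightarrow> u \<notin> S \<Longrightarrow> \<exists>s\<in>S. E u s"
  shows "exp_dominating V E S"
  unfolding exp_dominating_def
proof (intro conjI ballI)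
  fix u assume u: "u \<in> V"
  have fin: "finite S" using assms finite_subset by blast
  show "1 \<le> exp_weight V E S u"
  proof (cases "u \<in> S")
    case True
    then show ?thesis using exp_weight_member[OF fin True u, of E] by simp
  next
    case False
    then obtain s where "s \<in> S" "E u s" using assms(3) u by blast
    then show ?thesis using exp_weight_neighbour[OF fin u _ False] assms(2) by blast
  qed
qed (use assms in blast)

lemma dist_weight_mono_subgraph:
  assumes "V2 \<subseteq> V" "\<And>p. S_path V2 E S2 u v p \<Longrightarrow> \<forall>x\<in>set p. x \<in> S \<longleftrightarrow> x \<in> S2"
  shows "dist_weight (distS V2 E S2 u v) \<le> dist_weight (distS V E S u v)"
proof -
  have "dist_weight (distS V E S u v) \<ge> (1/2) ^ 0 * dist_weight (distS V2 E S2 u v)"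
  proof (rule dist_weight_ge_of_path_map)
    fix p assume p: "S_path V2 E S2 u v p"
    have "set p \<subseteq> V" using S_path_set_subset[OF p] assms(1) by blast
    from S_path_transfer[OF p this assms(2)[OF p]]
    have "S_path V E S u v p" .
    then show "\<exists>q. S_path V E S u v q \<and> length q \<le> length p + 0" by auto
  qed
  then show ?thesis by simp
qed

lemma exp_weight_mono:
  assumes "V2 \<subseteq> V" "S2 \<subseteq> S" "S \<inter> V2 \<subseteq> S2" "finite S" "u \<in> V2"
  shows "exp_weight V E S u \<ge> exp_weight V2 E S2 u"
proof -
  have "(\<Sum>v\<in>S2. dist_weight (distS V2 E S2 u v)) \<le> (\<Sum>v\<in>S2. dist_weight (distS V E S u v))"
  proof (rule sum_mono, rule dist_weight_mono_subgraph[OF assms(1)])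
    fix v p assume "S_path V2 E S2 u v p"
    then have "set p \<subseteq> V2" by (rule S_path_set_subset)
    then show "\<forall>x\<in>set p. x \<in> S \<longleftrightarrow> x \<in> S2" using assms(2,3) by auto
  qed
  also have "\<dots> \<le> (\<Sum>v\<in>S. dist_weight (distS V E S u v))"
    by (rule sum_mono2) (use assms dist_weight_nonneg in auto)
  finally show ?thesis by (simp add: exp_weight_eq_sum)
qed

lemma exp_weight_via_neighbour:
  assumes "V2 \<subseteq> V" "S2 \<subseteq> S" "S \<inter> V2 \<subseteq> S2" "z \<in> V" "z \<notin> V2" "E z a" "a \<in> V2"
    "a \<notin> S" "z \<notin> S"
  shows "(\<Sum>v\<in>S2. dist_weight (distS V E S z v)) \<ge> (1/2) * exp_weight V2 E S2 a"
proof -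
  have "(\<Sum>v\<in>S2. (1/2) * dist_weight (distS V2 E S2 a v)) \<le> (\<Sum>v\<in>S2. dist_weight (distS V E S z v))"
  proof (rule sum_mono)
    fix v
    have "dist_weight (distS V E S z v) \<ge> (1/2) ^ 1 * dist_weight (distS V2 E S2 a v)"
    proof (rule dist_weight_ge_of_path_map)
      fix p assume p: "S_path V2 E S2 a v p"
      have sp: "set p \<subseteq> V2" using S_path_set_subset[OF p] .
      have "S_path V E S z v (z # p)"
        by (rule S_path_Cons[OF p]) (use assms sp in auto)
      then show "\<exists>q. S_path V E S z v q \<and> length q \<le> length p + 1" by auto
    qed
    then show "(1/2) * dist_weight (distS V2 E S2 a v) \<le> dist_weight (distS V E S z v)" by simp
  qed
  then show ?thesis by (simp add: exp_weight_eq_sum sum_distrib_left)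
qed

lemma dist_weight_snoc_ge:
  assumes "V2 \<subseteq> V" "n \<in> V" "n \<notin> V2" "E a n" "n \<in> S" "u \<notin> S" "a \<notin> S" "a \<in> S2"
    "\<forall>x\<in>V2. x \<noteq> a \<longrightarrow> (x \<in> S \<longleftrightarrow> x \<in> S2)"
  shows "dist_weight (distS V E S u n) \<ge> (1/2) * dist_weight (distS V2 E S2 u a)"
proof -
  have "dist_weight (distS V E S u n) \<ge> (1/2) ^ 1 * dist_weight (distS V2 E S2 u a)"
  proof (rule dist_weight_ge_of_path_map)
    fix p assume p: "S_path V2 E S2 u a p"
    have sp: "set p \<subseteq> V2" using S_path_set_subset[OF p] .
    have eq: "\<forall>x\<in>set p. x \<noteq> a \<longrightarrow> (x \<in> S \<longleftrightarrow> x \<in> S2)" using sp assms(9) by blast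
    have "n \<notin> set p" using sp assms(3) by blast
    from S_path_snoc[OF p assms(2,4) this assms(5) _ assms(6,7,8) eq]
    have "S_path V E S u n (p @ [n])" using sp assms(1) by blast
    then show "\<exists>q. S_path V E S u n q \<and> length q \<le> length p + 1" by auto
  qed
  then show ?thesis by simp
qed

text \<open>Every admissible path to \<open>a\<close> extends to both \<open>n1\<close> and \<open>n2\<close>, so their two halved
  contributions make up for the lost contribution of \<open>a\<close>.\<close>
lemma exp_weight_split_member:
  assumes "V2 \<subseteq> V" "a \<in> S2" "S2 \<subseteq> V2" "finite S2" "n1 \<noteq> n2" "n1 \<in> V" "n2 \<in> V"
    "n1 \<notin> V2" "n2 \<notin> V2" "E a n1" "E a n2" "S = (S2 - {a}) \<union> {n1, n2}" "u \<in> V2" "u \<notin> S2"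
  shows "exp_weight V E S u \<ge> exp_weight V2 E S2 u"
proof -
  have eqv: "\<forall>x\<in>V2. x \<noteq> a \<longrightarrow> (x \<in> S \<longleftrightarrow> x \<in> S2)" using assms by auto
  have "(\<Sum>v\<in>S2 - {a}. dist_weight (distS V2 E S2 u v)) \<le> (\<Sum>v\<in>S2 - {a}. dist_weight (distS V E S u v))"
  proof (rule sum_mono, rule dist_weight_mono_subgraph[OF assms(1)])
    fix v p assume v: "v \<in> S2 - {a}" and p: "S_path V2 E S2 u v p"
    have "a \<notin> set p"
    proof
      assume "a \<in> set p"
      then have "a \<in> insert (hd p) (insert (last p) (set (butlast (tl p))))"
        using set_eq_ends_inner[OF S_path_nonempty[OF p]] by blast
      then show False using p v assms(2,14) by (auto simp: S_path_def)
    qed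
    moreover have "set p \<subseteq> V2" using S_path_set_subset[OF p] .
    ultimately show "\<forall>x\<in>set p. x \<in> S \<longleftrightarrow> x \<in> S2" using eqv by auto
  qed
  moreover have "exp_weight V E S u = (\<Sum>v\<in>S2 - {a}. dist_weight (distS V E S u v))
      + dist_weight (distS V E S u n1) + dist_weight (distS V E S u n2)"
  proof -
    have disj: "(S2 - {a}) \<inter> {n1, n2} = {}" using assms by auto
    have "exp_weight V E S u = (\<Sum>v\<in>S2 - {a}. dist_weight (distS V E S u v))
        + (\<Sum>v\<in>{n1,n2}. dist_weight (distS V E S u v))"
      unfolding exp_weight_eq_sum assms(12) by (rule sum.union_disjoint) (use assms disj in auto)
    then show ?thesis using assms(5) by simp
  qed
  moreover have "exp_weight V2 E S2 u
      = (\<Sum>v\<in>S2 - {a}. dist_weight (distS V2 E S2 u v)) + dist_weight (distS V2 E S2 u a)"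
    unfolding exp_weight_eq_sum using assms(2,4) by (simp add: sum.remove add.commute)
  moreover have "u \<notin> S" "a \<notin> S" "n1 \<in> S" "n2 \<in> S" using assms by auto
  note snoc = dist_weight_snoc_ge[where E = E, OF assms(1) _ _ _ _ this(1,2) assms(2) eqv]
  have "dist_weight (distS V E S u n1) \<ge> (1/2) * dist_weight (distS V2 E S2 u a)"
    by (rule snoc[OF assms(6,8,10) \<open>n1 \<in> S\<close>])
  moreover have "dist_weight (distS V E S u n2) \<ge> (1/2) * dist_weight (distS V2 E S2 u a)"
    by (rule snoc[OF assms(7,9,11) \<open>n2 \<in> S\<close>])
  ultimately show ?thesis by linarith
qed

section \<open>Local reductions\<close>

lemma exp_weight_ge_1_mono:
  assumes "exp_dominating V2 E S2" "V2 \<subseteq> V" "S2 \<subseteq> S" "S \<inter> V2 \<subseteq> S2" "finite S" "u \<in> V2"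
  shows "exp_weight V E S u \<ge> 1"
  using exp_weight_mono[OF assms(2-6), of E] assms(1,6) by (auto simp: exp_dominating_def)

definition exp_dom_bound :: "'a set \<Rightarrow> ('a \<Rightarrow> 'a \<Rightarrow> bool) \<Rightarrow> 'a set \<Rightarrow> bool" where
  "exp_dom_bound V E F \<longleftrightarrow>
     (\<exists>S. F \<subseteq> S \<and> exp_dominating V E S \<and> 3 * card S \<le> card V + 2 + card F)"

lemma exp_dom_bound_if_adjacent:
  assumes "finite V" "F \<subseteq> S" "S \<subseteq> V" "\<And>u. u \<in> V \<Longrightarrow> u \<notin> S \<Longrightarrow> \<exists>s\<in>S. E u s"
    "3 * card S \<le> card V + 2 + card F"
  shows "exp_dom_bound V E F"
proof -
  have "exp_dominating V E S" using exp_dominating_if_adjacent assms(1,3,4) by metis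
  then show ?thesis using assms(2,5) unfolding exp_dom_bound_def by blast
qed

lemma card_split_subset:
  assumes "finite V" "R \<subseteq> V" "F \<subseteq> V"
  shows "card V = card (V - R) + card R" "card F = card (F - R) + card (F \<inter> R)"
  using card_Int_Diff[OF assms(1), of R] card_Int_Diff[OF finite_subset[OF assms(3,1)], of R] assms(2)
  by (simp_all add: Int_absorb1)

lemma exp_dominating_Un:
  assumes fin: "finite V" and D: "D \<subseteq> V"
    and S': "exp_dominating (V - D) E S'" and SD: "exp_dominating D E SD"
  shows "exp_dominating V E (S' \<union> SD)"
  unfolding exp_dominating_def
proof (intro conjI ballI)
  have sub: "S' \<subseteq> V - D" "SD \<subseteq> D" using S' SD by (simp_all add: exp_dominating_def)
  then show "S' \<union> SD \<subseteq> V" using D by auto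
  have finS: "finite (S' \<union> SD)" using sub D fin by (meson finite_Diff finite_UnI finite_subset)
  fix u assume "u \<in> V"
  then consider "u \<in> D" | "u \<in> V - D" by blast
  then show "1 \<le> exp_weight V E (S' \<union> SD) u"
  proof cases
    case 1
    show ?thesis by (rule exp_weight_ge_1_mono[OF SD]) (use D finS 1 sub in auto)
  next
    case 2
    show ?thesis by (rule exp_weight_ge_1_mono[OF S']) (use finS 2 sub in auto)
  qed
qed

text \<open>\<open>b\<close> gets \<open>1/2\<close> from \<open>y\<close> along \<open>b v y\<close> and, through \<open>v\<close>, half of the weight \<open>\<ge> 1\<close> that
  \<open>v\<close> receives in \<open>V - R\<close>.\<close>
lemma exp_weight_pendant:
  assumes R: "R \<subseteq> V" and S': "exp_dominating (V - R) E S'" "finite S'"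
    and v: "v \<in> V" "v \<notin> R" "v \<notin> S'"
    and bvy: "b \<in> R" "y \<in> R" "b \<noteq> y" "E b v" "E v y"
  shows "exp_weight V E (insert y S') b \<ge> 1"
proof -
  let ?S = "insert y S'"
  have S'V: "S' \<subseteq> V - R" using S' by (simp add: exp_dominating_def)
  have bS: "b \<notin> ?S" and vS: "v \<notin> ?S" and yS': "y \<notin> S'" using bvy S'V v by auto
  have "(\<Sum>x\<in>S'. dist_weight (distS V E ?S b x)) \<ge> (1/2) * exp_weight (V - R) E S' v"
    by (rule exp_weight_via_neighbour) (use R S'V bvy v vS bS in auto)
  moreover have "exp_weight (V - R) E S' v \<ge> 1" using S' v by (auto simp: exp_dominating_def)
  moreover have "S_path V E ?S b y [b, v, y]"
    by (rule S_path_two_edges) (use bvy R v vS bS in auto)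
  then have "dist_weight (distS V E ?S b y) \<ge> 1/2" using dist_weight_ge_path by fastforce
  moreover have "exp_weight V E ?S b
      = dist_weight (distS V E ?S b y) + (\<Sum>x\<in>S'. dist_weight (distS V E ?S b x))"
    unfolding exp_weight_eq_sum using S'(2) yS' by simp
  ultimately show ?thesis by linarith
qed

lemma exp_dominating_insert_pendant:
  assumes fin: "finite V" and R: "R \<subseteq> V" and S': "exp_dominating (V - R) E S'"
    and v: "v \<in> V" "v \<notin> R"
    and bvy: "b \<in> R" "y \<in> R" "b \<noteq> y" "E b v" "E v y"
      "\<And>x. x \<in> R \<Longrightarrow> x \<noteq> b \<Longrightarrow> x \<noteq> y \<Longrightarrow> E x y"
  shows "exp_dominating V E (insert y S')"
  unfolding exp_dominating_def
proof (intro conjI ballI)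
  let ?S = "insert y S'"
  have S'V: "S' \<subseteq> V - R" using S' by (simp add: exp_dominating_def)
  have finS': "finite S'" using S'V fin by (meson finite_Diff finite_subset)
  have finS: "finite ?S" using finS' by simp
  have ySV: "y \<in> ?S" "y \<in> V" using bvy R by auto
  show "?S \<subseteq> V" using S'V ySV by auto
  fix u assume u: "u \<in> V"
  consider "u \<notin> R" | "u \<in> ?S" | "u \<in> R" "u \<notin> ?S" "u \<noteq> b" | "u = b" "v \<in> S'" | "u = b" "v \<notin> S'"
    by blast
  then show "1 \<le> exp_weight V E ?S u"
  proof cases
    case 1
    then show ?thesis by (intro exp_weight_ge_1_mono[OF S']) (use R finS u bvy in auto)
  next
    case 2
    then show ?thesis using exp_weight_member[OF finS _ u, of E] by simp
  next
    case 3
    then have "E u y" using bvy(6) ySV(1) by auto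
    then show ?thesis using exp_weight_neighbour[OF finS u ySV(2) 3(2) ySV(1)] by simp
  next
    case 4
    then show ?thesis using exp_weight_neighbour[OF finS u v(1)] bvy S'V by auto
  next
    case 5
    then show ?thesis using exp_weight_pendant[OF R S' finS' v 5(2) bvy(1-5)] by simp
  qed
qed

lemma exp_dominating_split:
  assumes fin: "finite V" and R: "R \<subseteq> V" and S': "exp_dominating (V - R) E S'"
    and v: "v \<in> S'"
    and cd: "c \<in> R" "d \<in> R" "c \<noteq> d" "E v c" "E v d" "E c v"
      "\<And>x. x \<in> R \<Longrightarrow> x \<noteq> c \<Longrightarrow> x \<noteq> d \<Longrightarrow> E x c \<or> E x d"
  shows "exp_dominating V E ((S' - {v}) \<union> {c, d})"
  unfolding exp_dominating_def
proof (intro conjI ballI)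
  let ?S = "(S' - {v}) \<union> {c, d}"
  have S'V: "S' \<subseteq> V - R" using S' by (simp add: exp_dominating_def)
  have finS': "finite S'" using S'V fin by (meson finite_Diff finite_subset)
  have finS: "finite ?S" using finS' by simp
  have cV: "c \<in> V" "d \<in> V" "c \<notin> V - R" "d \<notin> V - R" using cd R by auto
  show "?S \<subseteq> V" using S'V cV by auto
  fix u assume u: "u \<in> V"
  consider "u \<in> ?S" | "u \<in> R" "u \<notin> ?S" | "u = v" | "u \<in> V - R" "u \<notin> S'"
    using u v by blast
  then show "1 \<le> exp_weight V E ?S u"
  proof cases
    case 1
    then show ?thesis using exp_weight_member[OF finS _ u, of E] by simp
  next
    case 2
    then have "E u c \<or> E u d" using cd(7) by blast
    then show ?thesis using exp_weight_neighbour[OF finS u] cV 2 by blast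
  next
    case 3
    moreover have "v \<notin> ?S" using v S'V cd(1,2) by auto
    ultimately show ?thesis using exp_weight_neighbour[OF finS u cV(1)] cd(4) by simp
  next
    case 4
    have "exp_weight V E ?S u \<ge> exp_weight (V - R) E S' u"
      by (rule exp_weight_split_member[of "V - R" V v S' c d E ?S u])
        (use 4 v S'V finS' cd cV in auto)
    moreover have "exp_weight (V - R) E S' u \<ge> 1" using S' 4 by (auto simp: exp_dominating_def)
    ultimately show ?thesis by linarith
  qed
qed

lemma exp_dom_bound_remove_dominated:
  assumes IH: "exp_dom_bound (V - D) E (F - D)"
    and fin: "finite V" and D: "D \<subseteq> V" "F \<subseteq> V"
    and SD: "SD \<subseteq> D" "exp_dominating D E SD" "F \<inter> D \<subseteq> SD" "3 * card SD \<le> card D + card (F \<inter> D)"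
  shows "exp_dom_bound V E F"
proof -
  obtain S' where S': "F - D \<subseteq> S'" "exp_dominating (V - D) E S'"
    "3 * card S' \<le> card (V - D) + 2 + card (F - D)"
    using IH unfolding exp_dom_bound_def by blast
  have "card (S' \<union> SD) \<le> card S' + card SD" by (rule card_Un_le)
  then have "3 * card (S' \<union> SD) \<le> card V + 2 + card F"
    using S'(3) SD(4) card_split_subset[OF fin D] by linarith
  moreover have "F \<subseteq> S' \<union> SD" using S'(1) SD(3) by auto
  ultimately show ?thesis
    using exp_dominating_Un[OF fin D(1) S'(2) SD(2)] unfolding exp_dom_bound_def by blast
qed

lemma exp_dom_bound_remove_pendant:
  assumes IH: "exp_dom_bound (V - R) E (F - R)"
    and fin: "finite V" and R: "R \<subseteq> V" "F \<subseteq> V" and v: "v \<in> V" "v \<notin> R"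
    and bvy: "b \<in> R" "y \<in> R" "b \<noteq> y" "E b v" "E v y"
      "\<And>x. x \<in> R \<Longrightarrow> x \<noteq> b \<Longrightarrow> x \<noteq> y \<Longrightarrow> E x y"
    and FR: "F \<inter> R \<subseteq> {y}" "3 \<le> card R + card (F \<inter> R)"
  shows "exp_dom_bound V E F"
proof -
  obtain S' where S': "F - R \<subseteq> S'" "exp_dominating (V - R) E S'"
    "3 * card S' \<le> card (V - R) + 2 + card (F - R)"
    using IH unfolding exp_dom_bound_def by blast
  have S'V: "S' \<subseteq> V - R" using S'(2) by (simp add: exp_dominating_def)
  moreover have "finite S'" using S'V fin by (meson finite_Diff finite_subset)
  moreover have "y \<notin> S'" using S'V bvy(2) by auto
  ultimately have "card (insert y S') = card S' + 1" by simp
  then have "3 * card (insert y S') \<le> card V + 2 + card F"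
    using S'(3) FR(2) card_split_subset[OF fin R] by linarith
  moreover have "F \<subseteq> insert y S'" using S'(1) FR by auto
  ultimately show ?thesis
    using exp_dominating_insert_pendant[OF fin R(1) S'(2) v bvy] unfolding exp_dom_bound_def by blast
qed

lemma exp_dom_bound_remove_split:
  assumes IH: "exp_dom_bound (V - R) E (insert v (F - R))"
    and fin: "finite V" and R: "R \<subseteq> V" "F \<subseteq> V" and v: "v \<in> V" "v \<notin> R" "v \<notin> F"
    and cd: "c \<in> R" "d \<in> R" "c \<noteq> d" "E v c" "E v d" "E c v"
      "\<And>x. x \<in> R \<Longrightarrow> x \<noteq> c \<Longrightarrow> x \<noteq> d \<Longrightarrow> E x c \<or> E x d"
    and FR: "F \<inter> R \<subseteq> {c, d}" "4 \<le> card R + card (F \<inter> R)"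
  shows "exp_dom_bound V E F"
proof -
  obtain S' where S': "insert v (F - R) \<subseteq> S'" "exp_dominating (V - R) E S'"
    "3 * card S' \<le> card (V - R) + 2 + card (insert v (F - R))"
    using IH unfolding exp_dom_bound_def by blast
  have S'V: "S' \<subseteq> V - R" using S'(2) by (simp add: exp_dominating_def)
  have finS': "finite S'" using S'V fin by (meson finite_Diff finite_subset)
  have vS': "v \<in> S'" using S'(1) by auto
  have "(S' - {v}) \<inter> {c, d} = {}" using S'V cd(1,2) by auto
  then have "card ((S' - {v}) \<union> {c, d}) = card (S' - {v}) + card {c, d}"
    using finS' by (intro card_Un_disjoint) auto
  also have "\<dots> = card S' + 1"
  proof -
    have "card S' > 0" using vS' finS' by (auto simp: card_gt_0_iff)
    then show ?thesis using vS' finS' cd(3) by (simp add: card_Diff_singleton)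
  qed
  finally have "card ((S' - {v}) \<union> {c, d}) = card S' + 1" .
  moreover have "card (insert v (F - R)) = card (F - R) + 1"
    using v R fin by (simp add: finite_subset)
  ultimately have "3 * card ((S' - {v}) \<union> {c, d}) \<le> card V + 2 + card F"
    using S'(3) FR(2) card_split_subset[OF fin R] by linarith
  moreover have "F \<subseteq> (S' - {v}) \<union> {c, d}" using S'(1) FR v(3) by auto
  ultimately show ?thesis
    using exp_dominating_split[OF fin R(1) S'(2) vS' cd] unfolding exp_dom_bound_def by blast
qed

section \<open>Rooted spanning trees\<close>

definition children :: "'a set \<Rightarrow> 'a \<Rightarrow> ('a \<Rightarrow> 'a) \<Rightarrow> 'a \<Rightarrow> 'a set" where
  "children V r par u = {w \<in> V. w \<noteq> r \<and> par w = u}"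

definition rooted_tree :: "'a set \<Rightarrow> ('a \<Rightarrow> 'a \<Rightarrow> bool) \<Rightarrow> 'a \<Rightarrow> ('a \<Rightarrow> 'a) \<Rightarrow> ('a \<Rightarrow> nat) \<Rightarrow> bool" where
  "rooted_tree V E r par dep \<longleftrightarrow> finite V \<and> r \<in> V \<and> dep r = 0 \<and>
     (\<forall>u\<in>V. u \<noteq> r \<longrightarrow> par u \<in> V \<and> E u (par u) \<and> E (par u) u \<and> dep u = Suc (dep (par u))) \<and>
     card (children V r par r) \<le> 1 \<and> (\<forall>u\<in>V. card (children V r par u) \<le> 2)"

definition leaf_forced :: "'a set \<Rightarrow> 'a \<Rightarrow> ('a \<Rightarrow> 'a) \<Rightarrow> 'a set \<Rightarrow> bool" where
  "leaf_forced V r par F \<longleftrightarrow> F \<subseteq> V \<and> (\<forall>u\<in>F. u = r \<or> children V r par u = {})"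

definition prunable :: "'a set \<Rightarrow> 'a \<Rightarrow> ('a \<Rightarrow> 'a) \<Rightarrow> 'a set \<Rightarrow> bool" where
  "prunable V r par R \<longleftrightarrow> R \<subseteq> V \<and> R \<noteq> {} \<and> r \<notin> R \<and> (\<forall>d\<in>R. children V r par d \<subseteq> R)"

lemma childrenD:
  assumes "rooted_tree V E r par dep" "w \<in> children V r par u"
  shows "w \<in> V" "w \<noteq> r" "par w = u" "u \<in> V" "E w u" "E u w" "dep w = Suc (dep u)" "w \<noteq> u"
  using assms by (auto simp: rooted_tree_def children_def)

lemma parentD:
  assumes "rooted_tree V E r par dep" "w \<in> V" "w \<noteq> r"
  shows "par w \<in> V" "w \<in> children V r par (par w)" "E w (par w)" "E (par w) w"
    "dep w = Suc (dep (par w))"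
  using assms by (auto simp: rooted_tree_def children_def)

lemma rooted_treeD:
  assumes "rooted_tree V E r par dep"
  shows "finite V" "r \<in> V" "dep r = 0" "card (children V r par r) \<le> 1"
    "\<And>u. u \<in> V \<Longrightarrow> card (children V r par u) \<le> 2" "\<And>u. finite (children V r par u)"
  using assms by (auto simp: rooted_tree_def children_def)

lemma rooted_tree_depth_0: "rooted_tree V E r par dep \<Longrightarrow> w \<in> V \<Longrightarrow> dep w = 0 \<Longrightarrow> w = r"
  by (auto simp: rooted_tree_def)

lemma children_deepest:
  assumes "rooted_tree V E r par dep" "\<And>u. u \<in> V \<Longrightarrow> dep u \<le> d" "dep w = d"
  shows "children V r par w = {}"
proof (rule equals0I)
  fix c assume "c \<in> children V r par w"
  then have "c \<in> V" "dep c = Suc (dep w)" using childrenD[OF assms(1)] by auto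
  then show False using assms(2)[of c] assms(3) by simp
qed

lemma rooted_tree_Diff:
  assumes rt: "rooted_tree V E r par dep" and R: "prunable V r par R"
  shows "rooted_tree (V - R) E r par dep"
proof -
  have ch: "children (V - R) r par u \<subseteq> children V r par u" for u
    by (auto simp: children_def)
  have "card (children (V - R) r par u) \<le> card (children V r par u)" for u
    by (rule card_mono[OF rooted_treeD(6)[OF rt] ch])
  moreover have "par u \<notin> R" if "u \<in> V - R" "u \<noteq> r" for u
    using R parentD(2)[OF rt] that unfolding prunable_def by blast
  moreover have "\<forall>u\<in>V - R. card (children (V - R) r par u) \<le> 2"
    using calculation(1) rooted_treeD(5)[OF rt] by (meson DiffD1 order_trans)
  moreover have "card (children (V - R) r par r) \<le> 1"
    using calculation(1) rooted_treeD(4)[OF rt] by (meson order_trans)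
  ultimately show ?thesis using rt R unfolding prunable_def by (auto simp: rooted_tree_def)
qed

lemma leaf_forced_Diff: "leaf_forced V r par F \<Longrightarrow> leaf_forced (V - R) r par (F - R)"
  by (auto simp: leaf_forced_def children_def)

lemma leaf_forced_Diff_insert:
  "leaf_forced V r par F \<Longrightarrow> v \<in> V \<Longrightarrow> v \<notin> R \<Longrightarrow> children V r par v \<subseteq> R
    \<Longrightarrow> leaf_forced (V - R) r par (insert v (F - R))"
  by (auto simp: leaf_forced_def children_def)

lemma card_le_2_cases:
  assumes "finite A" "card A \<le> 2"
  obtains "A = {}" | x where "A = {x}" | x y where "x \<noteq> y" "A = {x, y}"
proof -
  consider "card A = 0" | "card A = 1" | "card A = 2" using assms(2) by linarith
  then show ?thesis using assms(1) that by cases (auto simp: card_1_singleton_iff card_2_iff)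
qed

lemma card_le_2_cases_member:
  assumes "finite A" "card A \<le> 2" "x \<in> A"
  obtains "A = {x}" | y where "y \<noteq> x" "A = {x, y}"
proof -
  from card_le_2_cases[OF assms(1,2)] show thesis
  proof cases
    case (3 a b)
    then show thesis using assms(3) that(2)[of b] that(2)[of a] by (auto simp: insert_commute)
  qed (use assms(3) that(1) in auto)
qed

lemma children_root_eq:
  assumes "rooted_tree V E r par dep" "w \<in> children V r par r"
  shows "children V r par r = {w}"
  using rooted_treeD(4,6)[OF assms(1)] assms(2) card_le_Suc0_iff_eq[of "children V r par r"]
  by auto

lemma obtain_deepest:
  fixes dep :: "'a \<Rightarrow> nat"
  assumes "finite V" "V \<noteq> {}"
  obtains x where "x \<in> V" "\<And>u. u \<in> V \<Longrightarrow> dep u \<le> dep x"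
proof -
  have "Max (dep ` V) \<in> dep ` V" using assms by (intro Max_in) auto
  then obtain x where "x \<in> V" "dep x = Max (dep ` V)" by (metis imageE)
  then show ?thesis using that assms(1) by simp
qed

section \<open>The induction on rooted trees\<close>

context
  fixes V :: "'a set" and E :: "'a \<Rightarrow> 'a \<Rightarrow> bool" and r :: 'a and par :: "'a \<Rightarrow> 'a"
    and dep :: "'a \<Rightarrow> nat" and F :: "'a set"
  assumes rt: "rooted_tree V E r par dep" and forced: "leaf_forced V r par F"
    and IH: "\<And>R F'. prunable V r par R \<Longrightarrow> leaf_forced (V - R) r par F' \<Longrightarrow> exp_dom_bound (V - R) E F'"
begin

abbreviation ch :: "'a \<Rightarrow> 'a set" where
  "ch \<equiv> children V r par"

private lemma finV: "finite V"
  using rooted_treeD(1)[OF rt] .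

private lemma FV: "F \<subseteq> V"
  using forced by (simp add: leaf_forced_def)

private lemma not_forced_if_children: "u \<noteq> r \<Longrightarrow> ch u \<noteq> {} \<Longrightarrow> u \<notin> F"
  using forced by (auto simp: leaf_forced_def)

lemma exp_dom_bound_two_leaves:
  assumes v: "v \<in> V" "v \<noteq> r" and chv: "ch v = {a, a'}" "a \<noteq> a'"
    and leaves: "ch a = {}" "ch a' = {}"
  shows "exp_dom_bound V E F"
proof -
  have "a \<in> ch v" "a' \<in> ch v" using chv by auto
  note A = childrenD[OF rt this(1)] and A' = childrenD[OF rt this(2)]
  have vF: "v \<notin> F" using not_forced_if_children v chv by auto
  have pr: "prunable V r par {a, a'}" using A A' leaves by (auto simp: prunable_def)
  consider "a \<in> F" "a' \<in> F" | "a \<in> F" "a' \<notin> F" | "a \<notin> F" "a' \<in> F" | "a \<notin> F" "a' \<notin> F"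
    by blast
  then show ?thesis
  proof cases
    case 1
    have "exp_dom_bound (V - {a, a'}) E (insert v (F - {a, a'}))"
      using IH[OF pr leaf_forced_Diff_insert[OF forced v(1)]] A A' chv by auto
    then show ?thesis
      by (rule exp_dom_bound_remove_split[where c = a and d = a', OF _ finV _ FV v(1) _ vF])
        (use A A' 1 chv in auto)
  next
    case 2
    show ?thesis
      by (rule exp_dom_bound_remove_pendant[where b = a' and y = a,
            OF IH[OF pr leaf_forced_Diff[OF forced]] finV _ FV v(1)]) (use A A' 2 chv in auto)
  next
    case 3
    show ?thesis
      by (rule exp_dom_bound_remove_pendant[where b = a and y = a',
            OF IH[OF pr leaf_forced_Diff[OF forced]] finV _ FV v(1)]) (use A A' 3 chv in auto)
  next
    case 4
    have pr3: "prunable V r par {v, a, a'}" using A A' leaves chv v by (auto simp: prunable_def)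
    have dom: "exp_dominating {v, a, a'} E {v}"
      by (rule exp_dominating_if_adjacent) (use A A' in auto)
    have "card {v, a, a'} = 3" using A A' chv by auto
    then show ?thesis
      by (intro exp_dom_bound_remove_dominated[where SD = "{v}",
            OF IH[OF pr3 leaf_forced_Diff[OF forced]] finV _ FV _ dom]) (use A A' 4 vF v(1) in auto)
  qed
qed

lemma exp_dom_bound_sibling_leaf:
  assumes deepest: "\<And>u. u \<in> V \<Longrightarrow> dep u \<le> dep x"
    and g: "g \<in> V" "g \<noteq> r" "ch g = {p, y}" "p \<noteq> y"
    and p: "ch p = {x}" and xF: "x \<notin> F" and y: "ch y = {}"
  shows "exp_dom_bound V E F"
proof -
  have "p \<in> ch g" "y \<in> ch g" "x \<in> ch p" using g p by auto
  note P = childrenD[OF rt this(1)] and Y = childrenD[OF rt this(2)] and X = childrenD[OF rt this(3)]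
  have gF: "g \<notin> F" and pF: "p \<notin> F" using not_forced_if_children g p P by auto
  have chx: "ch x = {}" using children_deepest[OF rt deepest] by simp
  have dist: "g \<noteq> x" "x \<noteq> y" using X(7) P(7) Y(7) by auto
  have pr: "prunable V r par {p, x, y}" using P X Y p chx y by (auto simp: prunable_def)
  show ?thesis
  proof (cases "y \<in> F")
    case True
    have "exp_dom_bound (V - {p, x, y}) E (insert g (F - {p, x, y}))"
      using IH[OF pr leaf_forced_Diff_insert[OF forced g(1)]] g P Y dist by auto
    then show ?thesis
      by (rule exp_dom_bound_remove_split[where c = p and d = y, OF _ finV _ FV g(1) _ gF])
        (use P X Y g dist True xF pF in auto)
  next
    case False
    show ?thesis
      by (rule exp_dom_bound_remove_pendant[where b = y and y = p,
            OF IH[OF pr leaf_forced_Diff[OF forced]] finV _ FV g(1)])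
        (use P X Y g dist False xF pF in auto)
  qed
qed

lemma exp_dom_bound_sibling_one_child:
  assumes deepest: "\<And>u. u \<in> V \<Longrightarrow> dep u \<le> dep x"
    and g: "g \<in> V" "g \<noteq> r" "ch g = {p, y}" "p \<noteq> y"
    and p: "ch p = {x}" and xF: "x \<notin> F" and y: "ch y = {z}"
  shows "exp_dom_bound V E F"
proof -
  have "p \<in> ch g" "y \<in> ch g" "x \<in> ch p" "z \<in> ch y" using g p y by auto
  note P = childrenD[OF rt this(1)] and Y = childrenD[OF rt this(2)]
    and X = childrenD[OF rt this(3)] and Z = childrenD[OF rt this(4)]
  have gF: "g \<notin> F" using not_forced_if_children[OF g(2)] g(3) by auto
  have pF: "p \<notin> F" using not_forced_if_children[OF P(2)] p by auto
  have yF: "y \<notin> F" using not_forced_if_children[OF Y(2)] y by auto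
  have chx: "ch x = {}" using children_deepest[OF rt deepest refl] .
  have chz: "ch z = {}"
    using children_deepest[OF rt deepest, of z] Z(7) Y(7) P(7) X(7) by simp
  have dist: "g \<noteq> x" "x \<noteq> y" "z \<noteq> p" "z \<noteq> g" "z \<noteq> x"
    using X(3,7) P(7) Y(7) Z(3,7) g(4) by auto
  show ?thesis
  proof (cases "z \<in> F")
    case True
    have pr: "prunable V r par {y, z}" using Y Z y chz by (auto simp: prunable_def)
    have dom: "exp_dominating {y, z} E {z}"
      by (rule exp_dominating_if_adjacent) (use Y Z in auto)
    show ?thesis
      by (rule exp_dom_bound_remove_dominated[where SD = "{z}",
            OF IH[OF pr leaf_forced_Diff[OF forced]] finV _ FV])
        (use Y Z True yF dom in auto)
  next
    case False
    have pr: "prunable V r par {p, x, y, z}" using P X Y Z p chx y chz by (auto simp: prunable_def)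
    have "exp_dom_bound (V - {p, x, y, z}) E (insert g (F - {p, x, y, z}))"
      using IH[OF pr leaf_forced_Diff_insert[OF forced g(1)]] g P Y dist by auto
    then show ?thesis
      by (rule exp_dom_bound_remove_split[where c = p and d = y, OF _ finV _ FV g(1) _ gF])
        (use P X Y Z g dist False xF pF yF in auto)
  qed
qed

lemma exp_dom_bound_leaf_sibling:
  assumes deepest: "\<And>u. u \<in> V \<Longrightarrow> dep u \<le> dep x"
    and g: "g \<in> V" "g \<noteq> r" "ch g = {p, y}" "p \<noteq> y"
    and p: "ch p = {x}" and xF: "x \<notin> F"
  shows "exp_dom_bound V E F"
proof -
  have "y \<in> ch g" "p \<in> ch g" "x \<in> ch p" using g p by auto
  note Y = childrenD[OF rt this(1)] and P = childrenD[OF rt this(2)] and X = childrenD[OF rt this(3)]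
  have grandchild_leaf: "ch z = {}" if "z \<in> ch y" for z
    using children_deepest[OF rt deepest] childrenD(7)[OF rt that] Y(7) P(7) X(7) by simp
  from card_le_2_cases[OF rooted_treeD(6)[OF rt] rooted_treeD(5)[OF rt Y(1)]] show ?thesis
  proof cases
    case 1
    then show ?thesis using exp_dom_bound_sibling_leaf[OF deepest g p xF] by blast
  next
    case (2 z)
    then show ?thesis using exp_dom_bound_sibling_one_child[OF deepest g p xF] by blast
  next
    case (3 z z')
    show ?thesis
      by (rule exp_dom_bound_two_leaves[OF Y(1,2) 3(2,1)]) (use grandchild_leaf 3 in auto)
  qed
qed

lemma exp_dom_bound_root_leaf:
  assumes deepest: "\<And>u. u \<in> V \<Longrightarrow> dep u \<le> dep x" and x: "x \<in> ch r"
  shows "exp_dom_bound V E F"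
proof -
  note X = childrenD[OF rt x]
  have V: "V = {r, x}"
  proof (intro subset_antisym subsetI)
    fix u assume u: "u \<in> V"
    show "u \<in> {r, x}"
    proof (cases "u = r")
      case False
      note U = parentD[OF rt u False]
      have "par u = r"
        using rooted_tree_depth_0[OF rt U(1)] deepest[OF u] U(5) X(7) rooted_treeD(3)[OF rt] by simp
      then show ?thesis using U(2) children_root_eq[OF rt x] by auto
    qed simp
  qed (use rooted_treeD(2)[OF rt] X in auto)
  show ?thesis
  proof (cases "F = {}")
    case True
    then show ?thesis using V X
      by (intro exp_dom_bound_if_adjacent[where S = "{r}"]) (auto simp: card_insert_if)
  next
    case False
    have "card F \<le> card {r, x}" using FV V by (intro card_mono) auto
    then show ?thesis using False V X FV
      by (intro exp_dom_bound_if_adjacent[where S = F]) auto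
  qed
qed

lemma exp_dom_bound_root_path:
  assumes deepest: "\<And>u. u \<in> V \<Longrightarrow> dep u \<le> dep x"
    and chr: "ch r = {p}" and chp: "ch p = {x}" and xF: "x \<notin> F"
  shows "exp_dom_bound V E F"
proof -
  have "p \<in> ch r" "x \<in> ch p" using chr chp by auto
  note P = childrenD[OF rt this(1)] and X = childrenD[OF rt this(2)]
  have pF: "p \<notin> F" using not_forced_if_children P chp by auto
  have V: "V = {r, p, x}"
  proof (intro subset_antisym subsetI)
    fix u assume u: "u \<in> V"
    show "u \<in> {r, p, x}"
    proof (cases "u = r")
      case False
      note U = parentD[OF rt u False]
      show ?thesis
      proof (cases "par u = r")
        case True
        then show ?thesis using U(2) chr by auto
      next
        case pu: False
        note U' = parentD[OF rt U(1) pu]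
        have "dep (par (par u)) = 0"
          using U(5) U'(5) deepest[OF u] X(7) P(7) rooted_treeD(3)[OF rt] by simp
        then have "par u = p" using rooted_tree_depth_0[OF rt U'(1)] U'(2) chr by auto
        then show ?thesis using U(2) chp by auto
      qed
    qed simp
  qed (use rooted_treeD(2)[OF rt] P X in auto)
  have "F \<subseteq> {r}" using FV pF xF V by auto
  then have "card (insert p F) = card F + 1" "card F \<le> 1"
    using pF by (auto simp: finite_subset card_mono subset_singleton_iff)
  moreover have "card V = 3" using V P X by auto
  ultimately show ?thesis
    by (intro exp_dom_bound_if_adjacent[where S = "insert p F"]) (use finV FV V P X in auto)
qed

lemma exp_dom_bound_single_leaf_child:
  assumes deepest: "\<And>u. u \<in> V \<Longrightarrow> dep u \<le> dep x"
    and p: "p \<in> V" "p \<noteq> r" "ch p = {x}"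
  shows "exp_dom_bound V E F"
proof -
  have "x \<in> ch p" using p by auto
  note X = childrenD[OF rt this]
  have chx: "ch x = {}" using children_deepest[OF rt deepest] by simp
  have pF: "p \<notin> F" using not_forced_if_children p by auto
  define g where "g = par p"
  note G = parentD[OF rt p(1,2), folded g_def]
  consider "x \<in> F" | "x \<notin> F" "g = r" | "x \<notin> F" "g \<noteq> r" "ch g = {p}"
    | y where "x \<notin> F" "g \<noteq> r" "y \<noteq> p" "ch g = {p, y}"
    using card_le_2_cases_member[OF rooted_treeD(6)[OF rt] rooted_treeD(5)[OF rt G(1)] G(2)]
    by metis
  then show ?thesis
  proof cases
    case 1
    have pr: "prunable V r par {p, x}" using X p chx by (auto simp: prunable_def)
    have dom: "exp_dominating {p, x} E {x}" by (rule exp_dominating_if_adjacent) (use X in auto)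
    show ?thesis
      by (rule exp_dom_bound_remove_dominated[where SD = "{x}",
            OF IH[OF pr leaf_forced_Diff[OF forced]] finV _ FV _ dom]) (use X 1 pF in auto)
  next
    case 2
    then show ?thesis
      using exp_dom_bound_root_path[OF deepest _ p(3)] children_root_eq[OF rt] G(2) by auto
  next
    case 3
    have gF: "g \<notin> F" using not_forced_if_children[OF 3(2)] G(2) by blast
    have pr: "prunable V r par {g, p, x}" using X G p chx 3 by (auto simp: prunable_def)
    have dom: "exp_dominating {g, p, x} E {p}"
      by (rule exp_dominating_if_adjacent) (use X G in auto)
    have "card {g, p, x} = 3" using X(7) G(5) by (auto simp: card_insert_if)
    then show ?thesis
      by (intro exp_dom_bound_remove_dominated[where SD = "{p}",
            OF IH[OF pr leaf_forced_Diff[OF forced]] finV _ FV _ dom]) (use X G 3 pF gF in auto)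
  next
    case (4 y)
    show ?thesis
      by (rule exp_dom_bound_leaf_sibling[OF deepest G(1) 4(2) 4(4) 4(3)[symmetric] p(3) 4(1)])
  qed
qed

end

lemma exp_dom_bound_rooted_tree:
  assumes "rooted_tree V E r par dep" "leaf_forced V r par F"
  shows "exp_dom_bound V E F"
  using assms
proof (induction "card V" arbitrary: V F rule: less_induct)
  case less
  note rt = less.prems(1) and forced = less.prems(2)
  have finV: "finite V" and rV: "r \<in> V" and FV: "F \<subseteq> V"
    using rooted_treeD[OF rt] forced by (auto simp: leaf_forced_def)
  have IH: "exp_dom_bound (V - R) E F'"
    if R: "prunable V r par R" and "leaf_forced (V - R) r par F'" for R F'
  proof -
    have "card (V - R) < card V"
      using R finV by (intro psubset_card_mono) (auto simp: prunable_def)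
    then show ?thesis using less.hyps rooted_tree_Diff[OF rt R] that(2) by blast
  qed
  obtain x where x: "x \<in> V" and deepest: "\<And>u. u \<in> V \<Longrightarrow> dep u \<le> dep x"
    using obtain_deepest[OF finV, of dep] rV by blast
  show ?case
  proof (cases "x = r")
    case True
    have "u = r" if "u \<in> V" for u
      using rooted_tree_depth_0[OF rt that] deepest[OF that] True rooted_treeD(3)[OF rt] by simp
    then have "V = {r}" using rV by blast
    then show ?thesis by (intro exp_dom_bound_if_adjacent[where S = V]) (use FV in auto)
  next
    case xr: False
    define p where "p = par x"
    note P = parentD[OF rt x xr, folded p_def]
    consider "p = r" | "p \<noteq> r" "children V r par p = {x}"
      | x' where "p \<noteq> r" "x' \<noteq> x" "children V r par p = {x, x'}"
      using card_le_2_cases_member[OF rooted_treeD(6)[OF rt] rooted_treeD(5)[OF rt P(1)] P(2)]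
      by metis
    then show ?thesis
    proof cases
      case 1
      then show ?thesis using exp_dom_bound_root_leaf[OF rt forced IH deepest] P(2) by simp
    next
      case 2
      then show ?thesis using exp_dom_bound_single_leaf_child[OF rt forced IH deepest P(1)] by simp
    next
      case (3 x')
      have "children V r par w = {}" if "w \<in> children V r par p" for w
        using children_deepest[OF rt deepest] childrenD(7)[OF rt that] P(5) by simp
      then show ?thesis
        using exp_dom_bound_two_leaves[OF rt forced IH P(1) 3(1) 3(3) 3(2)[symmetric]] 3(3) by blast
    qed
  qed
qed

section \<open>Existence of the rooted spanning tree\<close>

definition adj_on :: "'a set \<Rightarrow> ('a \<Rightarrow> 'a \<Rightarrow> bool) \<Rightarrow> 'a \<Rightarrow> 'a \<Rightarrow> bool" where
  "adj_on W E a b \<longleftrightarrow> E a b \<and> a \<in> W \<and> b \<in> W"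

lemma bfs_parent_depth:
  assumes conn: "\<forall>u\<in>W. (adj_on W E)\<^sup>*\<^sup>* y0 u"
  obtains par and dep :: "'a \<Rightarrow> nat"
  where "dep y0 = 0" "\<forall>u\<in>W. u \<noteq> y0 \<longrightarrow> par u \<in> W \<and> E (par u) u \<and> dep u = Suc (dep (par u))"
proof -
  define dep where "dep u = (LEAST k. (adj_on W E ^^ k) y0 u)" for u
  have depI: "(adj_on W E ^^ dep u) y0 u" if "u \<in> W" for u
  proof -
    have "\<exists>k. (adj_on W E ^^ k) y0 u" using conn that by (simp add: rtranclp_power)
    then show ?thesis unfolding dep_def by (rule LeastI_ex)
  qed
  have depL: "dep u \<le> k" if "(adj_on W E ^^ k) y0 u" for u k
    unfolding dep_def using that by (rule Least_le)
  have step: "\<exists>w. w \<in> W \<and> E w u \<and> dep u = Suc (dep w)" if u: "u \<in> W" "u \<noteq> y0" for u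
  proof -
    have "dep u \<noteq> 0" using depI[OF u(1)] u(2) by (metis relpowp_0_E)
    then obtain j where j: "dep u = Suc j" using not0_implies_Suc by blast
    obtain w where w: "(adj_on W E ^^ j) y0 w" "adj_on W E w u"
      using depI[OF u(1)] unfolding j by (elim relpowp_Suc_E)
    have wW: "w \<in> W" "E w u" using w(2) by (simp_all add: adj_on_def)
    have "dep u \<le> Suc (dep w)" by (rule depL[OF relpowp_Suc_I[OF depI[OF wW(1)] w(2)]])
    moreover have "dep w \<le> j" by (rule depL[OF w(1)])
    ultimately show ?thesis using wW j by (intro exI[of _ w]) simp
  qed
  define par where "par u = (SOME w. w \<in> W \<and> E w u \<and> dep u = Suc (dep w))" for u
  have "par u \<in> W \<and> E (par u) u \<and> dep u = Suc (dep (par u))" if "u \<in> W" "u \<noteq> y0" for u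
    unfolding par_def by (rule someI_ex[OF step[OF that]])
  moreover have "dep y0 = 0" using depL[of 0 y0] by simp
  ultimately show ?thesis using that by blast
qed

text \<open>Every vertex other than \<open>x\<close> reaches the BFS root \<open>r0\<close> along its parent chain, which
  cannot pass through the deepest vertex \<open>x\<close>.\<close>
lemma connected_Diff_deepest:
  assumes sym: "\<And>a b. E a b \<Longrightarrow> E b a" and "y \<in> V - {x}"
    and bfs: "dep r0 = 0" "\<forall>u\<in>V. u \<noteq> r0 \<longrightarrow> par u \<in> V \<and> E (par u) u \<and> dep u = Suc (dep (par u))"
    and deepest: "\<And>u. u \<in> V \<Longrightarrow> dep u \<le> dep x" and "r0 \<in> V" "x \<noteq> r0"
  shows "\<forall>u\<in>V - {x}. (adj_on (V - {x}) E)\<^sup>*\<^sup>* y u"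
proof -
  let ?W = "V - {x}" and ?A = "adj_on (V - {x}) E"
  have to_root: "\<forall>u\<in>?W. dep u = n \<longrightarrow> ?A\<^sup>*\<^sup>* u r0" for n
  proof (induction n)
    case 0
    then show ?case using bfs by auto
  next
    case (Suc n)
    show ?case
    proof (intro ballI impI)
      fix u assume u: "u \<in> ?W" "dep u = Suc n"
      then have pu: "par u \<in> V" "E (par u) u" "dep u = Suc (dep (par u))" using bfs by auto
      then have "par u \<noteq> x" using deepest[of u] u by auto
      then have "?A u (par u)" using pu u sym by (auto simp: adj_on_def)
      moreover have "?A\<^sup>*\<^sup>* (par u) r0" using Suc.IH pu u \<open>par u \<noteq> x\<close> by auto
      ultimately show "?A\<^sup>*\<^sup>* u r0" by (rule converse_rtranclp_into_rtranclp)
    qed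
  qed
  have symA: "?A\<inverse>\<inverse> = ?A" using sym by (auto simp: adj_on_def intro!: ext)
  have "?A\<^sup>*\<^sup>* y r0" using to_root assms(2) by blast
  moreover have "?A\<^sup>*\<^sup>* r0 u" if "u \<in> ?W" for u
  proof -
    have "(?A\<inverse>\<inverse>)\<^sup>*\<^sup>* r0 u" using to_root that by (blast intro: rtranclp_converseI)
    then show ?thesis unfolding symA .
  qed
  ultimately show ?thesis by (blast intro: rtranclp_trans)
qed

lemma card_children_le_2:
  assumes "finite V" "degree V E u \<le> 3" "par u \<in> V" "E u (par u)" "par u \<notin> children V x par u"
    "\<forall>w\<in>children V x par u. E u w"
  shows "card (children V x par u) \<le> 2"
proof -
  have "insert (par u) (children V x par u) \<subseteq> {w \<in> V. E u w}"
    using assms(3,4,6) by (auto simp: children_def)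
  then have "card (insert (par u) (children V x par u)) \<le> card {w \<in> V. E u w}"
    using assms(1) by (intro card_mono) auto
  also have "\<dots> \<le> 3" using assms(2) unfolding degree_def .
  finally show ?thesis
    using assms(1,5) finite_subset[of "children V x par u" V] by (simp add: children_def)
qed

lemma rooted_tree_if_parent:
  assumes fin: "finite V" and x: "x \<in> V" "dep x = 0" and deg: "\<forall>u\<in>V. degree V E u \<le> 3"
    and tree: "\<And>u. u \<in> V \<Longrightarrow> u \<noteq> x \<Longrightarrow> par u \<in> V \<and> E u (par u) \<and> E (par u) u \<and> dep u = Suc (dep (par u))"
    and root: "card (children V x par x) \<le> 1"
  shows "rooted_tree V E x par dep"
proof -
  have "card (children V x par u) \<le> 2" if u: "u \<in> V" for u
  proof (cases "u = x")
    case False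
    have "par u \<notin> children V x par u"
    proof
      assume "par u \<in> children V x par u"
      then have "par (par u) = u" "par u \<in> V" "par u \<noteq> x" by (auto simp: children_def)
      then show False using tree[of "par u"] tree[OF u False] by simp
    qed
    moreover have "\<forall>w\<in>children V x par u. E u w"
      using tree by (auto simp: children_def)
    ultimately show ?thesis
      using card_children_le_2[OF fin deg[rule_format, OF u]] tree[OF u False] by blast
  qed (use root in simp)
  then show ?thesis unfolding rooted_tree_def using fin x tree root by auto
qed

text \<open>Take for \<open>x\<close> a vertex of maximum BFS depth and for \<open>y\<close> its BFS parent.\<close>
lemma obtain_non_cut_vertex:
  assumes sg: "simple_graph V E" and conn: "connected_graph V E" and two: "card V \<ge> 2"
  obtains x y where "x \<in> V" "y \<in> V - {x}" "E y x" "\<forall>u\<in>V - {x}. (adj_on (V - {x}) E)\<^sup>*\<^sup>* y u"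
proof -
  have fin: "finite V" and inV: "\<And>a b. E a b \<Longrightarrow> a \<in> V \<and> b \<in> V"
    and sym: "\<And>a b. E a b \<Longrightarrow> E b a"
    using sg by (auto simp: simple_graph_def)
  obtain r0 where r0: "r0 \<in> V" using two by fastforce
  have "E \<le> adj_on V E" using inV by (auto simp: adj_on_def)
  then have reach: "\<forall>u\<in>V. (adj_on V E)\<^sup>*\<^sup>* r0 u"
    using conn r0 rtranclp_mono unfolding connected_graph_def by blast
  obtain par and dep :: "'a \<Rightarrow> nat" where
    bfs: "dep r0 = 0" "\<forall>u\<in>V. u \<noteq> r0 \<longrightarrow> par u \<in> V \<and> E (par u) u \<and> dep u = Suc (dep (par u))"
    by (rule bfs_parent_depth[OF reach])
  obtain x where x: "x \<in> V" and deepest: "\<And>u. u \<in> V \<Longrightarrow> dep u \<le> dep x"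
    using obtain_deepest[OF fin, of dep] r0 by blast
  have xr0: "x \<noteq> r0"
  proof
    assume "x = r0"
    have "\<not> V \<subseteq> {r0}" using card_mono[of "{r0}" V] two by auto
    then obtain u where "u \<in> V" "u \<noteq> r0" by blast
    then show False using deepest[of u] bfs \<open>x = r0\<close> by auto
  qed
  have "par x \<in> V" "E (par x) x" "dep x = Suc (dep (par x))" using bfs(2) x xr0 by blast+
  then have y: "par x \<in> V - {x}" "E (par x) x" by auto
  show ?thesis
    by (rule that[OF x y connected_Diff_deepest[where E = E and dep = dep and par = par,
          OF sym y(1) bfs deepest r0 xr0]])
qed

text \<open>Root the tree at a non-cut vertex \<open>x\<close>: its only child is its neighbour \<open>y\<close>, below
  which hangs a BFS tree of \<open>V - {x}\<close> rooted at \<open>y\<close>.\<close>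
lemma exists_rooted_tree:
  assumes sg: "simple_graph V E" and conn: "connected_graph V E" and deg: "\<forall>u\<in>V. degree V E u \<le> 3"
    and two: "card V \<ge> 2"
  obtains r par dep where "rooted_tree V E r par dep"
proof -
  have fin: "finite V" and sym: "\<And>a b. E a b \<Longrightarrow> E b a"
    using sg by (auto simp: simple_graph_def)
  obtain x y where x: "x \<in> V" and y: "y \<in> V - {x}" "E y x"
    and connW: "\<forall>u\<in>V - {x}. (adj_on (V - {x}) E)\<^sup>*\<^sup>* y u"
    using obtain_non_cut_vertex[OF sg conn two] by blast
  obtain par1 and dep1 :: "'a \<Rightarrow> nat" where
    dep1: "dep1 y = 0"
    and bfs: "\<forall>u\<in>V - {x}. u \<noteq> y \<longrightarrow> par1 u \<in> V - {x} \<and> E (par1 u) u \<and> dep1 u = Suc (dep1 (par1 u))"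
    by (rule bfs_parent_depth[OF connW])
  define par where "par u = (if u = y then x else par1 u)" for u
  define dep where "dep u = (if u = x then 0 else Suc (dep1 u))" for u
  have tree: "par u \<in> V \<and> E u (par u) \<and> E (par u) u \<and> dep u = Suc (dep (par u))"
    if u: "u \<in> V" "u \<noteq> x" for u
  proof (cases "u = y")
    case True
    then show ?thesis using y x dep1 sym unfolding par_def dep_def by auto
  next
    case False
    then have "par1 u \<in> V - {x}" "E (par1 u) u" "dep1 u = Suc (dep1 (par1 u))"
      using bfs u by auto
    then show ?thesis using False u sym unfolding par_def dep_def by auto
  qed
  have "children V x par x \<subseteq> {y}"
    using bfs by (auto simp: children_def par_def)
  then have "card (children V x par x) \<le> 1"
    using card_mono[of "{y}"] by fastforce
  from rooted_tree_if_parent[OF fin x _ deg tree this] show ?thesis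
    using that by (simp add: dep_def)
qed

theorem theorem3:
  fixes V :: "'a set" and E :: "'a \<Rightarrow> 'a \<Rightarrow> bool"
  assumes "simple_graph V E"
    and "connected_graph V E"
    and "\<forall>u\<in>V. degree V E u \<le> 3"
  shows "real (gamma_e V E) \<le> (real (card V) + 2) / 3"
proof -
  have fin: "finite V" using assms(1) by (simp add: simple_graph_def)
  have "exp_dom_bound V E {}"
  proof (cases "card V \<ge> 2")
    case True
    then obtain r par dep where "rooted_tree V E r par dep"
      using exists_rooted_tree assms by blast
    then show ?thesis by (rule exp_dom_bound_rooted_tree) (simp add: leaf_forced_def)
  next
    case False
    then show ?thesis by (intro exp_dom_bound_if_adjacent[where S = V]) (use fin in auto)
  qed
  then obtain S where S: "exp_dominating V E S" "3 * card S \<le> card V + 2"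
    unfolding exp_dom_bound_def by auto
  have "gamma_e V E \<le> card S" unfolding gamma_e_def by (rule Least_le) (use S in blast)
  then have "3 * gamma_e V E \<le> card V + 2" using S(2) by linarith
  then have "3 * real (gamma_e V E) \<le> real (card V) + 2" by linarith
  then show ?thesis by simp
qed
end
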